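(* Consider the two-bus model described in the context, with fixed parameters $0<\alpha_1\le\alpha_2$, $B_1,B_2>0$, $\overline f_1,\overline f_2>0$. Let $\boldsymbol\omega=(\overline{\mathbf q},\mathbf d)$ and $\boldsymbol\omega'=(\overline{\mathbf q}',\mathbf d)$ be two instances with the same demand profile $\mathbf d=(d_1,d_2)$, $d_1+d_2>0$, with $\overline q_2'=\overline q_2$ and $\overline q_1'\le \overline q_1$, both feasible for \textsf{ED-2b} and \textsf{SCED-2b}. Then $\mathsf{PoS}(\boldsymbol\omega')\le \mathsf{PoS}(\boldsymbol\omega)$.
   Context: Two-bus network: buses $v_1,v_2$ joined by two parallel lines $e_1,e_2$ with susceptances $B_1,B_2>0$ and thermal limits $\overline f_1,\overline f_2>0$. Bus $i\in\{1,2\}$ has a generator with capacity $\overline q_i\ge 0$ and linear cost $\alpha_i q_i$, and a demand $d_i\ge 0$; throughout $0<\alpha_1\le\alpha_2$ (bus 1 is the cheap bus). An instance is $\boldsymbol\omega=(\overline{\mathbf q},\mathbf d)$ with $\overline{\mathbf q}=(\overline q_1,\overline q_2)$, $\mathbf d=(d_1,d_2)$. Define $f^{\mathsf{ed}}:=(B_1+B_2)\min\{\overline f_1/B_1,\overline f_2/B_2\}$ and $f^{\mathsf{sc}}:=\min\{\overline f_1,\overline f_2\}$ (note $f^{\mathsf{sc}}\le f^{\mathsf{ed}}$). The economic dispatch problem \textsf{ED-2b} is: minimize $\alpha_1q_1+\alpha_2q_2$ over $(q_1,q_2)$ subject to $0\le q_1\le\overline q_1$, $0\le q_2\le\overline q_2$,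 $q_1+q_2=d_1+d_2$, and $-f^{\mathsf{ed}}\le q_1-d_1\le f^{\mathsf{ed}}$ (equivalently, under the DC model, the flows $B_k(q_1-d_1)/(B_1+B_2)$ on line $e_k$ satisfy $|{\cdot}|\le\overline f_k$, $k=1,2$). The security-constrained problem \textsf{SCED-2b} is the same problem with the additional constraint $-f^{\mathsf{sc}}\le q_1-d_1\le f^{\mathsf{sc}}$ (the flow $q_1-d_1$ on the surviving line after the outage of either line must respect that line's limit). Let $c^\star_{\mathsf{ed}}(\boldsymbol\omega)$ and $c^\star_{\mathsf{sc}}(\boldsymbol\omega)$ be the optimal values of \textsf{ED-2b} and \textsf{SCED-2b} for an instance $\boldsymbol\omega$ feasible for both. The price of security of $\boldsymbol\omega$ is $\mathsf{PoS}(\boldsymbol\omega):=c^\star_{\mathsf{sc}}(\boldsymbol\omega)/c^\star_{\mathsf{ed}}(\boldsymbol\omega)$. *)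

theory Defs
  imports Complex_Main
begin

text \<open>Parameters: line susceptances B1 B2, thermal limits fb1 fb2,
  cost coefficients a1 a2.\<close>

definition f_ed :: "real \<Rightarrow> real \<Rightarrow> real \<Rightarrow> real \<Rightarrow> real" where
  "f_ed B1 B2 fb1 fb2 = (B1 + B2) * min (fb1 / B1) (fb2 / B2)"

definition f_sc :: "real \<Rightarrow> real \<Rightarrow> real" where
  "f_sc fb1 fb2 = min fb1 fb2"

definition ed_feasible ::
  "real \<Rightarrow> real \<Rightarrow> real \<Rightarrow> real \<Rightarrow> real \<times> real \<Rightarrow> real \<times> real \<Rightarrow> (real \<times> real) set" where
  "ed_feasible B1 B2 fb1 fb2 qbar d =
     {q. 0 \<le> fst q \<and> fst q \<le> fst qbar \<and> 0 \<le> snd q \<and> snd q \<le> snd qbar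
         \<and> fst q + snd q = fst d + snd d
         \<and> - f_ed B1 B2 fb1 fb2 \<le> fst q - fst d \<and> fst q - fst d \<le> f_ed B1 B2 fb1 fb2}"

text \<open>Feasible set of SCED-2b: ED-2b plus the post-contingency constraint.\<close>
definition sced_feasible ::
  "real \<Rightarrow> real \<Rightarrow> real \<Rightarrow> real \<Rightarrow> real \<times> real \<Rightarrow> real \<times> real \<Rightarrow> (real \<times> real) set" where
  "sced_feasible B1 B2 fb1 fb2 qbar d =
     {q. q \<in> ed_feasible B1 B2 fb1 fb2 qbar d
         \<and> - f_sc fb1 fb2 \<le> fst q - fst d \<and> fst q - fst d \<le> f_sc fb1 fb2}"

definition cost :: "real \<Rightarrow> real \<Rightarrow> real \<times> real \<Rightarrow> real" where
  "cost a1 a2 q = a1 * fst q + a2 * snd q"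

definition c_ed :: "real \<Rightarrow> real \<Rightarrow> real \<Rightarrow> real \<Rightarrow> real \<Rightarrow> real \<Rightarrow> real \<times> real \<Rightarrow> real \<times> real \<Rightarrow> real" where
  "c_ed a1 a2 B1 B2 fb1 fb2 qbar d = Inf (cost a1 a2 ` ed_feasible B1 B2 fb1 fb2 qbar d)"

definition c_sc :: "real \<Rightarrow> real \<Rightarrow> real \<Rightarrow> real \<Rightarrow> real \<Rightarrow> real \<Rightarrow> real \<times> real \<Rightarrow> real \<times> real \<Rightarrow> real" where
  "c_sc a1 a2 B1 B2 fb1 fb2 qbar d = Inf (cost a1 a2 ` sced_feasible B1 B2 fb1 fb2 qbar d)"

definition PoS :: "real \<Rightarrow> real \<Rightarrow> real \<Rightarrow> real \<Rightarrow> real \<Rightarrow> real \<Rightarrow> real \<times> real \<Rightarrow> real \<times> real \<Rightarrow> real" where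
  "PoS a1 a2 B1 B2 fb1 fb2 qbar d =
     c_sc a1 a2 B1 B2 fb1 fb2 qbar d / c_ed a1 a2 B1 B2 fb1 fb2 qbar d"

end

theory Submission imports Defs begin

text \<open>Both problems are the same one-dimensional problem in the export x = q1 - d1 of the
  cheap bus: the cost is C - K x with C = a1 d1 + a2 d2 and K = a2 - a1, and only the transfer
  limit differs (Fe for ED, Fs = min Fe fsc for SCED). Each optimum therefore exports min m F
  with m = min (qbar1 - d1) d2, and PoS = 1 + K (min m Fe - min m Fs) / (C - K min m Fe).
  Lowering qbar1 lowers m, which can only shrink the numerator and enlarge the denominator.\<close>

definition dispatch_set :: "real \<Rightarrow> real \<times> real \<Rightarrow> real \<times> real \<Rightarrow> (real \<times> real) set" where
  "dispatch_set F qbar d =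
     {q. 0 \<le> fst q \<and> fst q \<le> fst qbar \<and> 0 \<le> snd q \<and> snd q \<le> snd qbar
         \<and> fst q + snd q = fst d + snd d \<and> - F \<le> fst q - fst d \<and> fst q - fst d \<le> F}"

lemma ed_feasible_eq_dispatch_set:
  "ed_feasible B1 B2 fb1 fb2 qbar d = dispatch_set (f_ed B1 B2 fb1 fb2) qbar d"
  unfolding ed_feasible_def dispatch_set_def by simp

lemma sced_feasible_eq_dispatch_set:
  "sced_feasible B1 B2 fb1 fb2 qbar d =
     dispatch_set (min (f_ed B1 B2 fb1 fb2) (f_sc fb1 fb2)) qbar d"
  unfolding sced_feasible_def ed_feasible_def dispatch_set_def by auto

lemma cost_eq_export:
  assumes "q \<in> dispatch_set F qbar d"
  shows "cost a1 a2 q = a1 * fst d + a2 * snd d - (a2 - a1) * (fst q - fst d)"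
proof -
  have "snd q = snd d - (fst q - fst d)" using assms unfolding dispatch_set_def by auto
  then show ?thesis unfolding cost_def by (simp add: right_diff_distrib left_diff_distrib)
qed

lemma export_le_min:
  assumes "q \<in> dispatch_set F qbar d"
  shows "fst q - fst d \<le> min (min (fst qbar - fst d) (snd d)) F"
  using assms unfolding dispatch_set_def by auto

lemma Inf_cost_dispatch_set:
  assumes "dispatch_set F qbar d \<noteq> {}" "a1 \<le> a2"
  shows "Inf (cost a1 a2 ` dispatch_set F qbar d) =
    a1 * fst d + a2 * snd d - (a2 - a1) * min (min (fst qbar - fst d) (snd d)) F"
    (is "_ = ?C - ?K * ?x")
proof (rule cInf_eq_minimum)
  obtain q where "q \<in> dispatch_set F qbar d" using assms(1) by auto
  then have opt: "(fst d + ?x, snd d - ?x) \<in> dispatch_set F qbar d"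
    unfolding dispatch_set_def by auto
  from cost_eq_export[OF opt] show "?C - ?K * ?x \<in> cost a1 a2 ` dispatch_set F qbar d"
    using opt by (metis add_diff_cancel_left' fst_conv image_eqI)
next
  fix c assume "c \<in> cost a1 a2 ` dispatch_set F qbar d"
  then obtain q where q: "q \<in> dispatch_set F qbar d" and c: "c = cost a1 a2 q" by auto
  have "?K * (fst q - fst d) \<le> ?K * ?x"
    using export_le_min[OF q] assms(2) by (simp add: mult_left_mono)
  then show "?C - ?K * ?x \<le> c" unfolding c cost_eq_export[OF q] by simp
qed

lemma min_gap_mono:
  fixes m m' Fs Fe :: real
  assumes "Fs \<le> Fe" "m' \<le> m"
  shows "min m' Fe - min m' Fs \<le> min m Fe - min m Fs"
  using assms by (simp add: min_def)

lemma security_ratio_mono: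
  fixes K C m m' Fs Fe :: real
  assumes "0 \<le> K" "Fs \<le> Fe" "m' \<le> m" "K * m < C"
  shows "(C - K * min m' Fs) / (C - K * min m' Fe) \<le> (C - K * min m Fs) / (C - K * min m Fe)"
proof -
  have ratio: "(C - K * min n Fs) / (C - K * min n Fe) =
      1 + K * (min n Fe - min n Fs) / (C - K * min n Fe)" if "n \<le> m" for n
  proof -
    have "K * min n Fe \<le> K * m" using that assms(1) by (simp add: mult_left_mono)
    then have "C - K * min n Fe \<noteq> 0" using assms(4) by linarith
    then show ?thesis by (simp add: field_simps)
  qed
  have "0 \<le> K * (min m Fe - min m Fs)"
    using assms(1,2) by (simp add: min_def)
  moreover have "K * (min m' Fe - min m' Fs) \<le> K * (min m Fe - min m Fs)"
    using min_gap_mono[OF assms(2,3)] assms(1) by (rule mult_left_mono)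
  moreover have "0 < C - K * min m Fe" "C - K * min m Fe \<le> C - K * min m' Fe"
    using assms(1,3,4) mult_left_mono[of "min m Fe" m K] mult_left_mono[of "min m' Fe" "min m Fe" K]
    by auto
  ultimately have "K * (min m' Fe - min m' Fs) / (C - K * min m' Fe)
      \<le> K * (min m Fe - min m Fs) / (C - K * min m Fe)"
    by (rule frac_le)
  then show ?thesis using ratio[OF assms(3)] ratio[OF order_refl] by simp
qed

theorem lemma1:
  fixes a1 a2 B1 B2 fb1 fb2 :: real and qbar qbar' d :: "real \<times> real"
  assumes "0 < a1" "a1 \<le> a2" "0 < B1" "0 < B2" "0 < fb1" "0 < fb2"
    and "0 \<le> fst qbar" "0 \<le> snd qbar" "0 \<le> fst qbar'" "0 \<le> snd qbar'"
    and "0 \<le> fst d" "0 \<le> snd d" "fst d + snd d > 0"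
    and "snd qbar' = snd qbar" "fst qbar' \<le> fst qbar"
    and "ed_feasible B1 B2 fb1 fb2 qbar d \<noteq> {}"
    and "sced_feasible B1 B2 fb1 fb2 qbar d \<noteq> {}"
    and "ed_feasible B1 B2 fb1 fb2 qbar' d \<noteq> {}"
    and "sced_feasible B1 B2 fb1 fb2 qbar' d \<noteq> {}"
  shows "PoS a1 a2 B1 B2 fb1 fb2 qbar' d \<le> PoS a1 a2 B1 B2 fb1 fb2 qbar d"
proof -
  define C where "C = a1 * fst d + a2 * snd d"
  define K where "K = a2 - a1"
  define Fe where "Fe = f_ed B1 B2 fb1 fb2"
  define Fs where "Fs = min Fe (f_sc fb1 fb2)"
  have PoS_eq: "PoS a1 a2 B1 B2 fb1 fb2 p d =
      (C - K * min (min (fst p - fst d) (snd d)) Fs) / (C - K * min (min (fst p - fst d) (snd d)) Fe)"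
    if "ed_feasible B1 B2 fb1 fb2 p d \<noteq> {}" "sced_feasible B1 B2 fb1 fb2 p d \<noteq> {}" for p
    using that assms(2)
    unfolding PoS_def c_sc_def c_ed_def sced_feasible_eq_dispatch_set ed_feasible_eq_dispatch_set
    by (simp add: Inf_cost_dispatch_set C_def K_def Fe_def Fs_def)
  have "K * min (fst qbar - fst d) (snd d) \<le> K * snd d"
    unfolding K_def using assms(2) by (simp add: mult_left_mono)
  also have "\<dots> < C"
    unfolding C_def K_def using assms(1,13) by (simp add: algebra_simps flip: distrib_left)
  finally show ?thesis
    unfolding PoS_eq[OF assms(18,19)] PoS_eq[OF assms(16,17)]
    using assms(2,15) by (intro security_ratio_mono) (auto simp: K_def Fs_def)
qed

end
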